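(* Let $V$ satisfy (C1)–(C4), let $\mathbb P(A):=V_A(1_\Omega)$, and for each $q\in\mathbb Q$ let $u(\cdot,q)\in\mathcal L^1(\Omega,\mathcal F,\mathbb P)$ be a version of the Radon–Nikodym derivative $d\mu_q/d\mathbb P$, where $\mu_q(A):=V_A(q)$ (which is absolutely continuous with respect to $\mathbb P$), chosen with $u(\omega,0)=0$ for all $\omega$. Define $$A^{\mathbb Q}:=\{\omega: u(\omega,q_1)<u(\omega,q_2)\ \forall q_1<q_2\in\mathbb Q\},\qquad B^{\mathbb Q}:=\{\omega: u(\omega,q)=\inf_{\tilde q\in\mathbb Q,\tilde q>q}u(\omega,\tilde q)\ \forall q\in\mathbb Q\}.$$ Then $A^{\mathbb Q},B^{\mathbb Q}\in\mathcal F$ and $\mathbb P(A^{\mathbb Q})=\mathbb P(B^{\mathbb Q})=1$.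
   Context: $\mathcal L^\infty(\Omega,\mathcal F)$: bounded $\mathcal F$-measurable real functions; $V:\mathcal F\times\mathcal L^\infty(\Omega,\mathcal F)\to\mathbb R$, $(A,f)\mapsto V_A(f)$. (C1) for every $f$, $A\mapsto V_A(f)$ is a finite signed measure, $V_A(0)=0$, and $A\mapsto V_A(1_\Omega)$ is a probability measure; (C2) $V_A(f)=V_\Omega(f1_A)$; (C3) $f\le g$ pointwise implies $V_A(f)\le V_A(g)$ for all $A$, and $\mathbb P(A)>0$ implies $V_A(x)<V_A(y)$ for real $x<y$; (C4) for every $A$, $V_A(f_n)\to V_A(f)$ whenever $(f_n)$ is uniformly bounded and converges pointwise everywhere to $f$. *)

theory Defs
  imports "HOL-Analysis.Analysis"
begin

definition Linf :: "'a measure \<Rightarrow> ('a \<Rightarrow> real) set" where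
  "Linf M = {f. f \<in> borel_measurable M \<and> (\<exists>C. \<forall>\<omega>\<in>space M. \<bar>f \<omega>\<bar> \<le> C)}"

definition C1 :: "'a measure \<Rightarrow> ('a set \<Rightarrow> ('a \<Rightarrow> real) \<Rightarrow> real) \<Rightarrow> bool" where
  "C1 M V \<longleftrightarrow>
     (\<forall>f\<in>Linf M. V {} f = 0 \<and>
        (\<forall>F. range F \<subseteq> sets M \<longrightarrow> disjoint_family F \<longrightarrow>
              (\<lambda>n. V (F n) f) sums V (\<Union>(range F)) f)) \<and>
     (\<forall>A\<in>sets M. V A (\<lambda>_. 0) = 0) \<and>
     (\<forall>A\<in>sets M. V A (\<lambda>_. 1) \<ge> 0) \<and> V (space M) (\<lambda>_. 1) = 1"

definition C2 :: "'a measure \<Rightarrow> ('a set \<Rightarrow> ('a \<Rightarrow> real) \<Rightarrow> real) \<Rightarrow> bool" where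
  "C2 M V \<longleftrightarrow> (\<forall>A\<in>sets M. \<forall>f\<in>Linf M. V A f = V (space M) (\<lambda>\<omega>. f \<omega> * indicator A \<omega>))"

definition C3 :: "'a measure \<Rightarrow> ('a set \<Rightarrow> ('a \<Rightarrow> real) \<Rightarrow> real) \<Rightarrow> bool" where
  "C3 M V \<longleftrightarrow>
     (\<forall>f\<in>Linf M. \<forall>g\<in>Linf M. (\<forall>\<omega>\<in>space M. f \<omega> \<le> g \<omega>) \<longrightarrow>
        (\<forall>A\<in>sets M. V A f \<le> V A g)) \<and>
     (\<forall>A\<in>sets M. V A (\<lambda>_. 1) > 0 \<longrightarrow> (\<forall>x y::real. x < y \<longrightarrow> V A (\<lambda>_. x) < V A (\<lambda>_. y)))"

definition C4 :: "'a measure \<Rightarrow> ('a set \<Rightarrow> ('a \<Rightarrow> real) \<Rightarrow> real) \<Rightarrow> bool" where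
  "C4 M V \<longleftrightarrow>
     (\<forall>A\<in>sets M. \<forall>fs f. (\<forall>n. fs n \<in> Linf M) \<longrightarrow> f \<in> Linf M \<longrightarrow>
        (\<exists>C. \<forall>n. \<forall>\<omega>\<in>space M. \<bar>fs n \<omega>\<bar> \<le> C) \<longrightarrow>
        (\<forall>\<omega>\<in>space M. (\<lambda>n. fs n \<omega>) \<longlonglongrightarrow> f \<omega>) \<longrightarrow>
        (\<lambda>n. V A (fs n)) \<longlonglongrightarrow> V A f)"

definition Vprob :: "'a measure \<Rightarrow> ('a set \<Rightarrow> ('a \<Rightarrow> real) \<Rightarrow> real) \<Rightarrow> 'a measure" where
  "Vprob M V = measure_of (space M) (sets M) (\<lambda>A. ennreal (V A (\<lambda>_. 1)))"

end

theory Submission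
  imports Defs "HOL-Probability.Probability"
begin

text \<open>Both properties are countable intersections of events of full probability.
  For \<open>q\<^sub>1 < q\<^sub>2\<close>, the event \<open>u(\<cdot>,q\<^sub>2) \<le> u(\<cdot>,q\<^sub>1)\<close> must be null: otherwise integrating
  over it would give \<open>V\<^sub>E(q\<^sub>2) \<le> V\<^sub>E(q\<^sub>1)\<close>, contradicting strict monotonicity (C3).
  For right continuity at \<open>q\<close> it suffices, by monotonicity, that for every \<open>c > 0\<close> the event
  \<open>F = {u(\<cdot>,q + 1/(n+1)) \<ge> u(\<cdot>,q) + c for all n}\<close> is null; integrating over \<open>F\<close> gives
  \<open>V\<^sub>F(q + 1/(n+1)) \<ge> V\<^sub>F(q) + c \<bbbP>(F)\<close>, and the left side tends to \<open>V\<^sub>F(q)\<close> by (C4).\<close>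

lemma Linf_const [simp]: "(\<lambda>_. c) \<in> Linf M"
  unfolding Linf_def by auto

lemma sets_Vprob [simp, measurable_cong]: "sets (Vprob M V) = sets M"
  unfolding Vprob_def by simp

lemma space_Vprob [simp]: "space (Vprob M V) = space M"
  by (rule sets_eq_imp_space_eq[OF sets_Vprob])

lemma emeasure_Vprob:
  assumes "C1 M V" "A \<in> sets M"
  shows "emeasure (Vprob M V) A = ennreal (V A (\<lambda>_. 1))"
  unfolding Vprob_def
proof (rule emeasure_measure_of_sigma)
  have V_one: "V {} (\<lambda>_. 1) = 0 \<and>
        (\<forall>F. range F \<subseteq> sets M \<longrightarrow> disjoint_family F \<longrightarrow>
              (\<lambda>n. V (F n) (\<lambda>_. 1)) sums V (\<Union>(range F)) (\<lambda>_. 1))"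
    using assms(1) Linf_const unfolding C1_def by blast
  have nonneg: "B \<in> sets M \<Longrightarrow> V B (\<lambda>_. 1) \<ge> 0" for B
    using assms(1) unfolding C1_def by blast
  show "sigma_algebra (space M) (sets M)" by (rule sets.sigma_algebra_axioms)
  show "positive (sets M) (\<lambda>A. ennreal (V A (\<lambda>_. 1)))"
    using V_one by (simp add: positive_def)
  show "countably_additive (sets M) (\<lambda>A. ennreal (V A (\<lambda>_. 1)))"
    unfolding countably_additive_def
  proof (intro allI impI)
    fix F :: "nat \<Rightarrow> _" assume F: "range F \<subseteq> sets M" "disjoint_family F"
    have "(\<lambda>n. V (F n) (\<lambda>_. 1)) sums V (\<Union>(range F)) (\<lambda>_. 1)"
      using V_one F by blast
    moreover have "\<And>n. 0 \<le> V (F n) (\<lambda>_. 1)"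
      using F(1) by (intro nonneg) auto
    ultimately show "(\<Sum>i. ennreal (V (F i) (\<lambda>_. 1))) = ennreal (V (\<Union>(range F)) (\<lambda>_. 1))"
      by (intro suminf_ennreal_eq)
  qed
qed (fact assms(2))

lemma measure_Vprob:
  assumes "C1 M V" "A \<in> sets M"
  shows "measure (Vprob M V) A = V A (\<lambda>_. 1)"
  using emeasure_Vprob[OF assms] assms unfolding measure_def C1_def by auto

lemma prob_space_Vprob:
  assumes "C1 M V"
  shows "prob_space (Vprob M V)"
  by standard (use emeasure_Vprob[OF assms, of "space M"] assms in \<open>simp add: C1_def\<close>)

lemma mono_INF_greater_eq:
  fixes f :: "rat \<Rightarrow> real"
  assumes "mono f"
    and gap: "\<And>k. \<exists>n. f (q + inverse (of_nat (Suc n))) < f q + inverse (real (Suc k))"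
  shows "ereal (f q) = (INF q'\<in>{q'. q' > q}. ereal (f q'))"
proof (rule antisym)
  show "ereal (f q) \<le> (INF q'\<in>{q'. q' > q}. ereal (f q'))"
    using \<open>mono f\<close> by (intro INF_greatest) (simp add: monoD less_imp_le)
  show "(INF q'\<in>{q'. q' > q}. ereal (f q')) \<le> ereal (f q)"
  proof (rule ereal_le_epsilon2)
    fix e :: real assume "0 < e"
    then obtain k where k: "inverse (real (Suc k)) < e"
      using reals_Archimedean by blast
    obtain n where n: "f (q + inverse (of_nat (Suc n))) < f q + inverse (real (Suc k))"
      using gap by blast
    have "(INF q'\<in>{q'. q' > q}. ereal (f q')) \<le> ereal (f (q + inverse (of_nat (Suc n))))"
      by (intro INF_lower) simp
    also have "\<dots> \<le> ereal (f q + e)"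
      using n k by simp
    finally show "(INF q'\<in>{q'. q' > q}. ereal (f q')) \<le> ereal (f q) + ereal e"
      by simp
  qed
qed

locale V_density =
  fixes M :: "'a measure"
    and V :: "'a set \<Rightarrow> ('a \<Rightarrow> real) \<Rightarrow> real"
    and u :: "'a \<Rightarrow> rat \<Rightarrow> real"
  assumes C1: "C1 M V" and C3: "C3 M V" and C4: "C4 M V"
    and u_int: "\<And>q. integrable (Vprob M V) (\<lambda>\<omega>. u \<omega> q)"
    and u_RN: "\<And>q A. A \<in> sets M \<Longrightarrow>
                 V A (\<lambda>_. real_of_rat q) = (\<integral>\<omega>\<in>A. u \<omega> q \<partial>(Vprob M V))"
begin

abbreviation P :: "'a measure" where "P \<equiv> Vprob M V"

sublocale prob_space P
  by (rule prob_space_Vprob[OF C1])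

lemma measure_P: "A \<in> sets M \<Longrightarrow> measure P A = V A (\<lambda>_. 1)"
  by (rule measure_Vprob[OF C1])

lemma u_measurable [measurable]: "(\<lambda>\<omega>. u \<omega> q) \<in> borel_measurable M"
  using borel_measurable_integrable[OF u_int[of q]] by simp

lemma set_integrable_u: "A \<in> sets M \<Longrightarrow> set_integrable P A (\<lambda>\<omega>. u \<omega> q)"
  unfolding set_integrable_def by (rule integrable_mult_indicator) (use u_int in auto)

lemma V_const_strict_mono:
  assumes "A \<in> sets M" "V A (\<lambda>_. 1) > 0" "x < y"
  shows "V A (\<lambda>_. x) < V A (\<lambda>_. y)"
  using C3 assms unfolding C3_def by blast

lemma V_const_tendsto:
  assumes "A \<in> sets M" "x \<longlonglongrightarrow> y"
  shows "(\<lambda>n. V A (\<lambda>_. x n)) \<longlonglongrightarrow> V A (\<lambda>_. y)"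
proof -
  obtain C where "\<And>n. norm (x n) \<le> C"
    using convergent_imp_Bseq[OF convergentI[OF assms(2)]] unfolding Bseq_def by auto
  then have "\<exists>C. \<forall>n. \<forall>\<omega>\<in>space M. \<bar>x n\<bar> \<le> C"
    by auto
  with C4 assms show ?thesis
    unfolding C4_def by auto
qed

lemma AE_not_in_if_V_nonpos:
  assumes E: "E \<in> sets M" and "V E (\<lambda>_. 1) \<le> 0"
  shows "AE \<omega> in P. \<omega> \<notin> E"
proof -
  have "measure P E = 0"
    using measure_P[OF E] assms(2) measure_nonneg[of P E] by simp
  then show ?thesis
    using E by (intro AE_not_in) (simp add: null_sets_def emeasure_eq_measure)
qed

lemma AE_u_less:
  assumes "q1 < q2"
  shows "AE \<omega> in P. u \<omega> q1 < u \<omega> q2"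
proof -
  define E where "E = {\<omega>\<in>space M. u \<omega> q2 \<le> u \<omega> q1}"
  have E: "E \<in> sets M" unfolding E_def by measurable
  have "(\<integral>\<omega>\<in>E. u \<omega> q2 \<partial>P) \<le> (\<integral>\<omega>\<in>E. u \<omega> q1 \<partial>P)"
    by (rule set_integral_mono[OF set_integrable_u[OF E] set_integrable_u[OF E]]) (auto simp: E_def)
  then have "V E (\<lambda>_. real_of_rat q2) \<le> V E (\<lambda>_. real_of_rat q1)"
    using u_RN[OF E] by simp
  then have "V E (\<lambda>_. 1) \<le> 0"
    using V_const_strict_mono[OF E] assms by (meson not_le of_rat_less)
  from AE_not_in_if_V_nonpos[OF E this] AE_space show ?thesis
    by eventually_elim (auto simp: E_def)
qed

lemma AE_strict_mono_u: "AE \<omega> in P. strict_mono (u \<omega>)"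
proof -
  have "AE \<omega> in P. \<forall>q1 q2. q1 < q2 \<longrightarrow> u \<omega> q1 < u \<omega> q2"
    unfolding AE_all_countable by (intro allI) (simp add: AE_u_less)
  then show ?thesis
    by (simp add: strict_mono_def)
qed

lemma AE_u_right_gap:
  assumes "c > 0"
  shows "AE \<omega> in P. \<exists>n. u \<omega> (q + inverse (of_nat (Suc n))) < u \<omega> q + c"
proof -
  define r :: "nat \<Rightarrow> rat" where "r n = q + inverse (of_nat (Suc n))" for n
  define F where "F = {\<omega>\<in>space M. \<forall>n. u \<omega> q + c \<le> u \<omega> (r n)}"
  have F: "F \<in> sets M" unfolding F_def by measurable
  have "real_of_rat (r n) = real_of_rat q + inverse (real (Suc n))" for n
    unfolding r_def by (simp add: of_rat_add of_rat_inverse)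
  moreover have "(\<lambda>n. real_of_rat q + inverse (real (Suc n))) \<longlonglongrightarrow> real_of_rat q"
    using tendsto_add[OF tendsto_const LIMSEQ_inverse_real_of_nat] by simp
  ultimately have lim: "(\<lambda>n. V F (\<lambda>_. real_of_rat (r n))) \<longlonglongrightarrow> V F (\<lambda>_. real_of_rat q)"
    using V_const_tendsto[OF F] by simp
  have lower: "V F (\<lambda>_. real_of_rat q) + measure P F * c \<le> V F (\<lambda>_. real_of_rat (r n))" for n
  proof -
    have const: "set_integrable P F (\<lambda>_. c)"
      using F integrable_mult_indicator[of F P "\<lambda>_. c"] by (simp add: set_integrable_def)
    have "(\<integral>\<omega>\<in>F. u \<omega> q + c \<partial>P) \<le> (\<integral>\<omega>\<in>F. u \<omega> (r n) \<partial>P)"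
      by (rule set_integral_mono[OF set_integral_add(1)[OF set_integrable_u[OF F] const]
            set_integrable_u[OF F]]) (auto simp: F_def)
    then show ?thesis
      using set_integral_add(2)[OF set_integrable_u[OF F] const] u_RN[OF F]
        set_integral_const[of F P c] F emeasure_finite by simp
  qed
  have "V F (\<lambda>_. real_of_rat q) + measure P F * c \<le> V F (\<lambda>_. real_of_rat q)"
    by (rule LIMSEQ_le_const[OF lim]) (use lower in blast)
  then have "V F (\<lambda>_. 1) \<le> 0"
    using \<open>c > 0\<close> measure_P[OF F] by (simp add: mult_le_0_iff)
  from AE_not_in_if_V_nonpos[OF F this] AE_space show ?thesis
    by eventually_elim (auto simp: F_def r_def not_le)
qed

lemma AE_u_right_continuous:
  "AE \<omega> in P. \<forall>q. ereal (u \<omega> q) = (INF q'\<in>{q'. q' > q}. ereal (u \<omega> q'))"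
proof -
  have "AE \<omega> in P. \<forall>q k. \<exists>n.
          u \<omega> (q + inverse (of_nat (Suc n))) < u \<omega> q + inverse (real (Suc k))"
    unfolding AE_all_countable by (intro allI AE_u_right_gap) simp
  with AE_strict_mono_u show ?thesis
    by eventually_elim (simp add: mono_INF_greater_eq strict_mono_mono)
qed

lemma V_eq_1_if_AE:
  assumes "{\<omega>\<in>space M. Q \<omega>} \<in> sets M" "AE \<omega> in P. Q \<omega>"
  shows "V {\<omega>\<in>space M. Q \<omega>} (\<lambda>_. 1) = 1"
  using prob_Collect_eq_1[of Q] measure_P[OF assms(1)] assms by simp

end

theorem mainTheorem9:
  fixes M :: "'a measure"
    and V :: "'a set \<Rightarrow> ('a \<Rightarrow> real) \<Rightarrow> real"
    and u :: "'a \<Rightarrow> rat \<Rightarrow> real"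
  assumes "C1 M V" and "C2 M V" and "C3 M V" and "C4 M V"
    and u_int: "\<And>q. integrable (Vprob M V) (\<lambda>\<omega>. u \<omega> q)"
    and u_RN: "\<And>q A. A \<in> sets M \<Longrightarrow>
                 V A (\<lambda>_. real_of_rat q) = (\<integral>\<omega>\<in>A. u \<omega> q \<partial>(Vprob M V))"
    and u0: "\<And>\<omega>. u \<omega> 0 = 0"
  defines "AQ \<equiv> {\<omega>\<in>space M. \<forall>q1 q2::rat. q1 < q2 \<longrightarrow> u \<omega> q1 < u \<omega> q2}"
    and "BQ \<equiv> {\<omega>\<in>space M. \<forall>q::rat.
                 ereal (u \<omega> q) = (INF q'\<in>{q'. q' > q}. ereal (u \<omega> q'))}"
  shows "AQ \<in> sets M \<and> BQ \<in> sets M \<and> V AQ (\<lambda>_. 1) = 1 \<and> V BQ (\<lambda>_. 1) = 1"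
proof -
  interpret V_density M V u
    using assms by unfold_locales
  have AQ: "AQ \<in> sets M" and BQ: "BQ \<in> sets M"
    unfolding AQ_def BQ_def by measurable
  have "AE \<omega> in P. \<forall>q1 q2::rat. q1 < q2 \<longrightarrow> u \<omega> q1 < u \<omega> q2"
    using AE_strict_mono_u by (simp add: strict_mono_def)
  then have "V AQ (\<lambda>_. 1) = 1"
    unfolding AQ_def by (rule V_eq_1_if_AE[OF AQ[unfolded AQ_def]])
  moreover have "V BQ (\<lambda>_. 1) = 1"
    unfolding BQ_def by (rule V_eq_1_if_AE[OF BQ[unfolded BQ_def] AE_u_right_continuous])
  ultimately show ?thesis
    using AQ BQ by blast
qed

end
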